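(* Let $n$ be an even positive integer, $p\ne 2$ a prime dividing $n$, and $p^a$ the largest power of $p$ dividing $n$. Suppose there is a prime $q$ with $n/3<q<n/2$ and $n-2q<p^a$. Then $n$ satisfies the 3-variation of Condition 1 with $p$, $q$ and any prime that divides $\binom{n}{n/2}$.
   Context: A positive integer $n$ satisfies the $N$-variation of Condition 1 with primes $p_1,\dots,p_N$ if these are $N$ different primes and for every $1\le k\le n-1$, $\binom{n}{k}$ is divisible by at least one of $p_1,\dots,p_N$. *)

theory Defs
  imports "HOL-Computational_Algebra.Primes" Complex_Main
begin

definition cond1_var :: "nat \<Rightarrow> nat \<Rightarrow> nat set \<Rightarrow> bool" where
  "cond1_var N n P \<longleftrightarrow> finite P \<and> card P = N \<and> (\<forall>p\<in>P. prime p) \<and>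
     (\<forall>k. 1 \<le> k \<and> k \<le> n - 1 \<longrightarrow> (\<exists>p\<in>P. p dvd (n choose k)))"

end

theory Submission
  imports Defs
begin

text \<open>For k < n/2 write k! C(n,k) = (n-k+1) \<cdots> n. If p^a does not divide k, then p divides
  C(n,k), because k C(n,k) = n C(n-1,k-1) is divisible by p^a. If p^a divides k, it also divides
  n - 2k, so p^a \<le> k and p^a \<le> n - 2k; together with n - 2q < p^a this gives k < q and
  n - k < 2q < n. Then 2q is one of the factors n-k+1, ..., n while q does not divide k!, so q
  divides C(n,k). The range k > n/2 follows by symmetry, and k = n/2 is covered by r.\<close>

lemma fact_mult_choose_eq_prod:
  fixes n k :: nat
  assumes "k \<le> n"
  shows "fact k * (n choose k) = \<Prod>{n - k + 1..n}"
proof -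
  have "fact n = fact (n - k) * (fact k * (n choose k) :: nat)"
    using binomial_fact_lemma[OF assms] by (simp add: ac_simps)
  then have "fact k * (n choose k) = fact n div (fact (n - k) :: nat)"
    by simp
  also have "\<dots> = \<Prod>{n - k + 1..n}"
    using fact_div_fact[of "n - k" n] by simp
  finally show ?thesis .
qed

lemma prime_dvd_choose_if_dvd_top_factor:
  fixes n k q j :: nat
  assumes "prime q" "k < q" "q dvd j" "n - k < j" "j \<le> n"
  shows "q dvd n choose k"
proof (cases "k \<le> n")
  case False
  then show ?thesis by (simp add: binomial_eq_0)
next
  case True
  have "j dvd \<Prod>{n - k + 1..n}"
    using assms(4,5) by (intro dvd_prodI) auto
  then have "q dvd fact k * (n choose k)"
    using assms(3) fact_mult_choose_eq_prod[OF True] dvd_trans by metis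
  moreover have "\<not> q dvd fact k"
    using assms(1,2) prime_dvd_fact_iff by auto
  ultimately show ?thesis
    using assms(1) prime_dvd_mult_iff by blast
qed

lemma prime_dvd_choose_if_prime_power_not_dvd:
  fixes n k p a :: nat
  assumes "prime p" "p ^ a dvd n" "\<not> p ^ a dvd k"
  shows "p dvd n choose k"
proof (rule ccontr)
  assume "\<not> p dvd n choose k"
  then have "coprime (p ^ a) (n choose k)"
    using assms(1) by (simp add: prime_imp_coprime)
  obtain j where j: "k = Suc j"
    using assms(3) by (cases k) auto
  have "k * (n choose k) = n * ((n - 1) choose j)"
    using binomial_absorption[of j n] j by simp
  then have "p ^ a dvd k * (n choose k)"
    using assms(2) by (metis dvd_mult2)
  with \<open>coprime (p ^ a) (n choose k)\<close> have "p ^ a dvd k"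
    using coprime_dvd_mult_left_iff by blast
  with assms(3) show False ..
qed

lemma not_dvd_between_multiples:
  fixes n m q :: nat
  assumes "m * q < n" "n < Suc m * q"
  shows "\<not> q dvd n"
proof
  assume "q dvd n"
  then obtain c where "n = q * c" ..
  with assms have "m * q < c * q" "c * q < Suc m * q"
    by (simp_all add: mult.commute)
  then have "m < c" "c < Suc m"
    using mult_less_cancel2 by blast+
  then show False by simp
qed

lemma ex_dvd_choose_by_symmetry:
  fixes n :: nat and P :: "nat set"
  assumes "\<And>k. 1 \<le> k \<Longrightarrow> 2 * k \<le> n \<Longrightarrow> \<exists>p\<in>P. p dvd n choose k"
    and "1 \<le> k" "k \<le> n - 1"
  shows "\<exists>p\<in>P. p dvd n choose k"
proof (cases "2 * k \<le> n")
  case True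
  with assms show ?thesis by blast
next
  case False
  then have "\<exists>p\<in>P. p dvd n choose (n - k)"
    using assms by auto
  moreover have "n choose (n - k) = n choose k"
    using assms(3) False by (intro binomial_symmetric[symmetric]) auto
  ultimately show ?thesis by simp
qed

lemma prime_dvd_choose_lower_half:
  fixes n k p a q :: nat
  assumes "prime p" "p ^ a dvd n" "prime q" "2 * q < n" "n - 2 * q < p ^ a"
    and "1 \<le> k" "2 * k < n"
  shows "p dvd n choose k \<or> q dvd n choose k"
proof (cases "p ^ a dvd k")
  case False
  then show ?thesis
    using prime_dvd_choose_if_prime_power_not_dvd[OF assms(1,2)] by blast
next
  case True
  then have "p ^ a dvd n - 2 * k"
    using assms(2) by (simp add: dvd_diff_nat)
  then have "p ^ a \<le> n - 2 * k"
    using assms(7) by (intro dvd_imp_le) auto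
  then have "k < q"
    using assms(5) by linarith
  have "p ^ a \<le> k"
    using True assms(6) by (intro dvd_imp_le) auto
  then have "n - k < 2 * q"
    using assms(4,5,7) by linarith
  with \<open>k < q\<close> assms(3,4) have "q dvd n choose k"
    by (intro prime_dvd_choose_if_dvd_top_factor[of q k "2 * q"]) auto
  then show ?thesis ..
qed

theorem mainTheorem12:
  fixes n p a q r :: nat
  assumes "n > 0" and "even n"
    and "prime p" and "p \<noteq> 2" and "p dvd n"
    and "p ^ a dvd n" and "\<not> p ^ (a + 1) dvd n"
    and "prime q" and "real n / 3 < real q" and "real q < real n / 2"
    and "n - 2 * q < p ^ a"
    and "prime r" and "r dvd (n choose (n div 2))" and "r \<noteq> p" and "r \<noteq> q"
  shows "cond1_var 3 n {p, q, r}"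
proof -
  have "2 * q < n" "n < 3 * q"
    using assms(9,10) by linarith+
  then have "p \<noteq> q"
    using assms(5) not_dvd_between_multiples[of 2 q n] by auto
  have "\<exists>s\<in>{p, q, r}. s dvd n choose k" if "1 \<le> k" "2 * k \<le> n" for k
  proof (cases "2 * k = n")
    case True
    then show ?thesis
      using assms(13) by auto
  next
    case False
    then show ?thesis
      using prime_dvd_choose_lower_half[OF assms(3,6,8) \<open>2 * q < n\<close> assms(11) \<open>1 \<le> k\<close>] that
      by auto
  qed
  then have "\<forall>k. 1 \<le> k \<and> k \<le> n - 1 \<longrightarrow> (\<exists>s\<in>{p, q, r}. s dvd n choose k)"
    using ex_dvd_choose_by_symmetry by blast
  moreover have "card {p, q, r} = 3"
    using \<open>p \<noteq> q\<close> assms(14,15) by simp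
  ultimately show ?thesis
    unfolding cond1_var_def using assms(3,8,12) by simp
qed

end
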